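(* Let $n\ge 1$, let $D^{n+1}\subset\mathbb{R}^{n+1}$ be the closed unit disk and $S^n=\partial D^{n+1}$ the unit sphere. Let $U_1,\ldots,U_k\subset D^{n+1}$ be the pieces of a cleavage of $D^{n+1}$ by oriented affine hyperplanes (as described in the context), let $N_i=U_i\cap S^n$, let $c_i$ be the centre of mass of $U_i$, and let $\beta=\bigcup_{i=1}^k \partial U_i$ be the blueprint, where $\partial U_i$ denotes the frontier of $U_i$ in $D^{n+1}$. For $s\in S^n\setminus N_i$ let $l(s,c_i)$ be the line segment from $s$ to $c_i$. Define $$\alpha\colon \coprod_{i=1}^k \left(S^n\setminus N_i\right)\to \beta$$ by sending $s$ in the $i$-th summand to the point of $\beta$ that lies on $l(s,c_i)$ and on the boundary $\partial U_i$. Then $\alpha$ is well defined (for each such $s$ there is exactly one such point, and it lies in $\beta$), and the restriction of $\alpha$ to any single connected component of any one of the complements $S^n\setminus N_i$ is injective.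
   Context: A cleavage of $D^{n+1}$ into $k$ pieces is obtained recursively: an oriented affine hyperplane $P$ (an element of $\mathrm{Gr}_n(\mathbb{R}^{n+1})\times\mathbb{R}$) cuts the current piece $W$ (initially $D^{n+1}$) into two closed pieces $W\cap H^+$ and $W\cap H^-$, where $H^\pm$ are the two closed half-spaces bounded by $P$ (the first piece being the one in the direction of the normal vector of $P$), each required to have nonempty interior; each of these pieces is then further cut recursively by further hyperplanes, according to a binary rooted planar tree whose $k-1$ internal vertices are decorated by the hyperplanes $P_1,\ldots,P_{k-1}$. The resulting $k$ pieces $U_1,\ldots,U_k$ (outgoing colours) are each of the form $D^{n+1}\cap H_{1}\cap\cdots\cap H_{r}$ for closed half-spaces $H_j$ bounded by some of the hyperplanes $P_1,\dots,P_{k-1}$, and have nonempty interior; their union is $D^{n+1}$ and distinct pieces meet only inside the union of the hyperplanes. The sets $N_i=U_i\cap S^n$ are the corresponding outgoing colours of the cleavage of $S^n$, and $S^n\setminus N_i$ is the complement of $N_i$ in $S^n$. *)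

theory Defs
  imports "HOL-Analysis.Analysis"
begin

text \<open>An oriented affine hyperplane is given by a nonzero normal vector u and an offset b:
  P = {x. u \<bullet> x = b}; the closed half-space in the direction of the normal is
  {x. u \<bullet> x \<ge> b}, the other one is {x. u \<bullet> x \<le> b}.\<close>

definition hs_plus :: "'a::euclidean_space \<times> real \<Rightarrow> 'a set" where
  "hs_plus P = {x. fst P \<bullet> x \<ge> snd P}"

definition hs_minus :: "'a::euclidean_space \<times> real \<Rightarrow> 'a set" where
  "hs_minus P = {x. fst P \<bullet> x \<le> snd P}"

datatype 'a cltree = Leaf | Node "'a \<times> real" "'a cltree" "'a cltree"

fun valid_cleavage :: "'a::euclidean_space set \<Rightarrow> 'a cltree \<Rightarrow> bool" where
  "valid_cleavage W Leaf = True"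
| "valid_cleavage W (Node P l r) =
     (fst P \<noteq> 0 \<and>
      interior (W \<inter> hs_plus P) \<noteq> {} \<and> interior (W \<inter> hs_minus P) \<noteq> {} \<and>
      valid_cleavage (W \<inter> hs_plus P) l \<and> valid_cleavage (W \<inter> hs_minus P) r)"

fun cleavage_pieces :: "'a::euclidean_space set \<Rightarrow> 'a cltree \<Rightarrow> 'a set list" where
  "cleavage_pieces W Leaf = [W]"
| "cleavage_pieces W (Node P l r) =
     cleavage_pieces (W \<inter> hs_plus P) l @ cleavage_pieces (W \<inter> hs_minus P) r"

definition centre_of_mass :: "'a::euclidean_space set \<Rightarrow> 'a" where
  "centre_of_mass U = (1 / measure lebesgue U) *\<^sub>R integral U (\<lambda>x. x)"

definition rel_bd :: "'a::euclidean_space set \<Rightarrow> 'a set \<Rightarrow> 'a set" where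
  "rel_bd D U = (top_of_set D) frontier_of U"

definition blueprint :: "'a::euclidean_space set \<Rightarrow> 'a set list \<Rightarrow> 'a set" where
  "blueprint D Us = (\<Union>U\<in>set Us. rel_bd D U)"

definition cleave_alpha :: "'a::euclidean_space set \<Rightarrow> 'a set \<Rightarrow> 'a \<Rightarrow> 'a" where
  "cleave_alpha D U s = (THE p. p \<in> closed_segment s (centre_of_mass U) \<and> p \<in> rel_bd D U)"

end

theory Submission
  imports Defs
begin

text \<open>Every piece U of a cleavage of the disk is a convex body, and its centre of mass c lies in
  its interior: otherwise a hyperplane through c supports U, and the integral over U of the
  nonnegative affine function vanishing on that hyperplane would be both zero (by the definition of
  c) and positive. Since c is interior, the segment from a point s of the disk outside U to c
  enters U exactly once; the entry point is the unique point of the segment on the frontier of U.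
  For injectivity, two boundary points s, s' of the convex disk whose segments to the interior
  point c meet away from c lie on a common ray from c, and a ray from an interior point leaves a
  convex set only once. So alpha is injective on all of the complement, not merely on each of its
  components.\<close>

lemma integrable_on_compact_continuous:
  fixes f :: "'a::euclidean_space \<Rightarrow> 'b::euclidean_space"
  assumes "compact S" "continuous_on S f"
  shows "f integrable_on S"
proof -
  have "integrable lborel (\<lambda>x. indicator S x *\<^sub>R f x)"
    by (rule borel_integrable_compact[OF assms])
  then have "f absolutely_integrable_on S"
    by (simp add: set_integrable_def integrable_completion borel_measurable_integrable)
  then show ?thesis
    using set_lebesgue_integral_eq_integral(1) by blast
qed

lemma measure_lebesgue_pos_if_interior:
  fixes U :: "'a::euclidean_space set"
  assumes "U \<in> lmeasurable" "interior U \<noteq> {}"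
  shows "measure lebesgue U > 0"
proof -
  obtain z r where "r > 0" "ball z r \<subseteq> U"
    using assms(2) by (metis all_not_in_conv mem_interior)
  moreover have "cball z (r/2) \<subseteq> ball z r" using \<open>r > 0\<close> by (simp add: cball_subset_ball_iff)
  ultimately have "cball z (r/2) \<subseteq> U" by blast
  have "0 < measure lebesgue (cball z (r/2))"
    using content_cball_pos[of "r/2" z] \<open>r > 0\<close> by simp
  also have "\<dots> \<le> measure lebesgue U"
    using \<open>cball z (r/2) \<subseteq> U\<close> assms(1) by (intro measure_mono_fmeasurable) auto
  finally show ?thesis .
qed

lemma integral_pos_if_pos_at_interior_point:
  fixes f :: "'a::euclidean_space \<Rightarrow> real"
  assumes U: "compact U" and f: "continuous_on U f" "\<And>x. x \<in> U \<Longrightarrow> f x \<ge> 0"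
    and z: "z \<in> interior U" "f z > 0"
  shows "integral U f > 0"
proof -
  obtain d where d: "d > 0" "\<And>x. dist x z < d \<Longrightarrow> dist (f x) (f z) < f z / 2"
    using continuous_on_interior[OF f(1) z(1)] z(2)
    unfolding continuous_at_eps_delta by (meson half_gt_zero)
  obtain r where r: "r > 0" "ball z r \<subseteq> U"
    using z(1) by (meson mem_interior)
  define \<rho> where "\<rho> = min d r / 2"
  have "cball z \<rho> \<subseteq> ball z r" using d r by (auto simp: \<rho>_def cball_subset_ball_iff)
  with r have ball_in_U: "cball z \<rho> \<subseteq> U" by blast
  have f_large: "f z / 2 \<le> f x" if "x \<in> cball z \<rho>" for x
  proof -
    have "dist x z < d" using that d r by (simp add: \<rho>_def dist_commute)
    then show ?thesis using d(2)[of x] unfolding dist_real_def by linarith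
  qed
  have integrable: "f integrable_on S" if "S \<subseteq> U" "compact S" for S
    using integrable_on_compact_continuous[OF that(2) continuous_on_subset[OF f(1) that(1)]] .
  have "0 < f z / 2 * measure lebesgue (cball z \<rho>)"
    using z d r by (intro mult_pos_pos measure_lebesgue_pos_if_interior) (auto simp: \<rho>_def)
  also have "\<dots> = integral (cball z \<rho>) (\<lambda>x. f z / 2)"
    using lmeasure_integral[of "cball z \<rho>"] integral_mult_right[of "cball z \<rho>" "f z / 2" "\<lambda>x. 1"]
    by simp
  also have "\<dots> \<le> integral (cball z \<rho>) f"
    using ball_in_U f_large by (intro integral_le integrable) (auto intro: integrable_on_const)
  also have "\<dots> \<le> integral U f"
    using ball_in_U f(2) by (intro integral_subset_le integrable U) auto
  finally show ?thesis .
qed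

lemma integral_inner_diff_centre_of_mass:
  fixes U :: "'a::euclidean_space set"
  assumes U: "compact U" "measure lebesgue U > 0"
  shows "integral U (\<lambda>x. a \<bullet> x - a \<bullet> centre_of_mass U) = 0"
proof -
  define m where "m = measure lebesgue U"
  define I where "I = integral U (\<lambda>x. x)"
  have "(\<lambda>x. x) integrable_on U"
    using U(1) by (intro integrable_on_compact_continuous continuous_intros)
  from integral_linear[OF this bounded_linear_inner_right[of a]]
  have "integral U (\<lambda>x. a \<bullet> x) = a \<bullet> I"
    unfolding I_def o_def by simp
  moreover have "integral U (\<lambda>x. a \<bullet> centre_of_mass U) = m * (a \<bullet> centre_of_mass U)"
    using lmeasure_integral[OF lmeasurable_compact[OF U(1)]]
      integral_mult_right[of U "a \<bullet> centre_of_mass U" "\<lambda>x. 1"]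
    by (simp add: m_def)
  moreover have "m *\<^sub>R centre_of_mass U = I"
    using U(2) by (simp add: centre_of_mass_def m_def I_def)
  ultimately show ?thesis
    using U(1) by (subst integral_diff) (auto intro!: integrable_on_compact_continuous continuous_intros
        simp: lmeasurable_compact)
qed

lemma centre_of_mass_in_interior:
  fixes U :: "'a::euclidean_space set"
  assumes U: "convex U" "compact U" "interior U \<noteq> {}"
  shows "centre_of_mass U \<in> interior U"
proof (rule ccontr)
  define c where "c = centre_of_mass U"
  assume "c \<notin> interior U"
  then have "0 \<notin> (\<lambda>x. x - c) ` interior U" by auto
  then obtain a where "a \<noteq> 0" and a: "\<forall>y\<in>(\<lambda>x. x - c) ` interior U. 0 \<le> a \<bullet> y"
    using separating_hyperplane_set_0[of "(\<lambda>x. x - c) ` interior U"] convex_interior[OF U(1)]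
    by auto
  define f where "f x = a \<bullet> x - a \<bullet> c" for x
  have "closure (interior U) \<subseteq> {x. a \<bullet> x \<ge> a \<bullet> c}"
    using a by (intro closure_minimal) (auto simp: inner_diff_right intro: closed_halfspace_ge)
  then have f_nonneg: "f x \<ge> 0" if "x \<in> U" for x
    using convex_closure_interior[OF U(1,3)] closure_subset that by (auto simp: f_def)
  obtain z r where z: "z \<in> interior U" and r: "r > 0" "ball z r \<subseteq> U"
    using U(3) by (metis all_not_in_conv mem_interior)
  define w where "w = z - (r/2) *\<^sub>R (a /\<^sub>R norm a)"
  have "w \<in> U" using r \<open>a \<noteq> 0\<close> by (auto simp: w_def dist_norm)
  moreover have "f z = f w + (r/2) * norm a"
    using \<open>a \<noteq> 0\<close> by (simp add: f_def w_def inner_diff_right dot_square_norm power2_eq_square)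
  ultimately have "f z > 0"
    using f_nonneg[of w] r \<open>a \<noteq> 0\<close> by (simp add: add_nonneg_pos)
  then have "integral U f > 0"
    using U(2) z f_nonneg unfolding f_def
    by (intro integral_pos_if_pos_at_interior_point continuous_intros) auto
  moreover have "integral U f = 0"
    using U(2) measure_lebesgue_pos_if_interior[OF lmeasurable_compact U(3)]
    unfolding f_def c_def by (intro integral_inner_diff_centre_of_mass)
  ultimately show False by simp
qed

lemma closed_segment_image_interval_from_start:
  "closed_segment a b = (\<lambda>u. a + u *\<^sub>R (b - a)) ` {0..1}"
  unfolding closed_segment_image_interval by (simp add: algebra_simps)

lemma convex_segment_interior_beyond_closure:
  fixes S :: "'a::euclidean_space set"
  assumes "convex S" "c \<in> interior S" "s + u *\<^sub>R (c - s) \<in> closure S" "u < v" "v \<le> 1"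
  shows "s + v *\<^sub>R (c - s) \<in> interior S"
proof -
  define x where "x = s + u *\<^sub>R (c - s)"
  define e where "e = (v - u) / (1 - u)"
  have "u < 1" using assms by simp
  then have e: "0 < e" "e \<le> 1" and "u + e * (1 - u) = v"
    using assms by (auto simp: e_def field_simps)
  have "x - e *\<^sub>R (x - c) \<in> interior S"
    using mem_interior_closure_convex_shrink[OF assms(1,2) _ e] assms(3) by (simp add: x_def)
  also have "x - e *\<^sub>R (x - c) = s + v *\<^sub>R (c - s)"
    by (simp add: x_def algebra_simps flip: \<open>u + e * (1 - u) = v\<close>)
  finally show ?thesis .
qed

lemma closed_segments_to_interior_point_inj:
  fixes S :: "'a::euclidean_space set"
  assumes S: "convex S" "c \<in> interior S" and s: "s \<in> frontier S" "s' \<in> frontier S"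
    and p: "p \<in> closed_segment s c" "p \<in> closed_segment s' c" "p \<noteq> c"
  shows "s = s'"
proof -
  have ordered: "x = x'"
    if x: "x \<in> frontier S" "x' \<in> frontier S" and ab: "0 \<le> a" "a \<le> b" "b < 1"
      and eq: "x + a *\<^sub>R (c - x) = x' + b *\<^sub>R (c - x')" for x x' a b
  proof -
    define w where "w = (b - a) / (1 - a)"
    have "x - c = (1 / (1 - a)) *\<^sub>R ((1 - a) *\<^sub>R (x - c))"
      using ab by simp
    also have "(1 - a) *\<^sub>R (x - c) = (1 - b) *\<^sub>R (x' - c)"
      using eq by (simp add: algebra_simps)
    also have "(1 / (1 - a)) *\<^sub>R ((1 - b) *\<^sub>R (x' - c)) = ((1 - b) / (1 - a)) *\<^sub>R (x' - c)"
      by simp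
    also have "(1 - b) / (1 - a) = 1 - w"
      using ab by (simp add: w_def field_simps)
    finally have "x = x' + w *\<^sub>R (c - x')"
      by (simp add: algebra_simps)
    moreover have "x \<notin> interior S" "x' \<in> closure S"
      using x by (auto simp: frontier_def)
    ultimately have "\<not> 0 < w"
      using convex_segment_interior_beyond_closure[OF S, of x' 0 w] ab by (auto simp: w_def)
    moreover have "0 \<le> w" using ab by (simp add: w_def)
    ultimately have "w = 0" by simp
    with \<open>x = x' + w *\<^sub>R (c - x')\<close> show ?thesis by simp
  qed
  obtain u v where u: "0 \<le> u" "p = s + u *\<^sub>R (c - s)" "u < 1"
    and v: "0 \<le> v" "p = s' + v *\<^sub>R (c - s')" "v < 1"
    using p unfolding closed_segment_image_interval_from_start
    by (force simp: le_less)
  show ?thesis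
    using ordered[OF s, of u v] ordered[OF s(2,1), of v u] u v by (cases "u \<le> v") auto
qed

lemma ex1_closed_segment_Int_boundary:
  fixes U D :: "'a::euclidean_space set"
  assumes U: "convex U" "closed U" "U \<subseteq> D" and "convex D"
    and c: "c \<in> interior U" and s: "s \<in> D" "s \<notin> U"
  shows "\<exists>!p. p \<in> closed_segment s c \<and> p \<in> U \<inter> closure (D - U)"
proof -
  define P where "P u = s + u *\<^sub>R (c - s)" for u
  have seg: "closed_segment s c = P ` {0..1}"
    unfolding closed_segment_image_interval_from_start P_def ..
  have not_interior: "q \<notin> interior U" if "q \<in> closure (D - U)" for q
    using that closure_mono[of "D - U" "- U"] closure_complement[of U] by auto
  have beyond: "P v \<in> interior U" if "P u \<in> U" "u < v" "v \<le> 1" for u v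
    using convex_segment_interior_beyond_closure[OF U(1) c] that closure_subset
    unfolding P_def by blast
  have "c \<in> U" using c interior_subset by blast
  then obtain p where p: "p \<in> closed_segment s c" "p \<in> frontier U"
    using connected_Int_frontier[of "closed_segment s c" U] s(2) by blast
  then obtain u0 where u0: "0 \<le> u0" "u0 \<le> 1" "p = P u0"
    using seg by auto
  have "p \<in> U" "p \<notin> interior U"
    using p(2) U(2) by (auto simp: frontier_def)
  have "0 < u0" using u0 \<open>p \<in> U\<close> s(2) by (cases "u0 = 0") (auto simp: P_def)
  have "closed_segment s c \<subseteq> D"
    using closed_segment_subset[OF s(1) _ \<open>convex D\<close>] \<open>c \<in> U\<close> U(3) by blast
  have "P t \<in> D - U" if "0 \<le> t" "t < u0" for t
  proof -
    have "P t \<in> closed_segment s c" using seg that u0 by auto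
    moreover have "P t \<notin> U" using beyond[of t u0] that u0 \<open>p \<notin> interior U\<close> by auto
    ultimately show ?thesis using \<open>closed_segment s c \<subseteq> D\<close> by blast
  qed
  then have "P ` closure {0..<u0} \<subseteq> closure (D - U)"
    using closure_subset[of "D - U"]
    by (intro image_closure_subset) (auto simp: P_def[abs_def] intro!: continuous_intros)
  then have "p \<in> closure (D - U)"
    using u0 \<open>0 < u0\<close> by auto
  show ?thesis
  proof (rule ex1I[of _ p])
    show "p \<in> closed_segment s c \<and> p \<in> U \<inter> closure (D - U)"
      using p(1) \<open>p \<in> U\<close> \<open>p \<in> closure (D - U)\<close> by blast
  next
    fix q assume q: "q \<in> closed_segment s c \<and> q \<in> U \<inter> closure (D - U)"
    then obtain v where v: "0 \<le> v" "v \<le> 1" "q = P v" using seg by auto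
    have "\<not> u0 < v" "\<not> v < u0"
      using beyond[of u0 v] beyond[of v u0] u0 v q not_interior \<open>p \<in> U\<close> \<open>p \<notin> interior U\<close> by auto
    then show "q = p" using u0 v by simp
  qed
qed

lemma rel_bd_eq_Int_closure_diff:
  fixes U D :: "'a::euclidean_space set"
  assumes "U \<subseteq> D" "closed U"
  shows "rel_bd D U = U \<inter> closure (D - U)"
  using assms closure_subset[of "D - U"]
  by (auto simp: rel_bd_def frontier_of_closures closure_of_subtopology closure_closed Int_absorb1)

lemma cleavage_pieces_convex_body:
  fixes W :: "'a::euclidean_space set"
  assumes "valid_cleavage W T" "convex W" "compact W" "interior W \<noteq> {}"
    and "U \<in> set (cleavage_pieces W T)"
  shows "convex U \<and> compact U \<and> interior U \<noteq> {} \<and> U \<subseteq> W"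
  using assms
proof (induction T arbitrary: W)
  case Leaf
  then show ?case by simp
next
  case (Node P l r)
  have halfspaces: "convex (hs_plus P)" "closed (hs_plus P)" "convex (hs_minus P)" "closed (hs_minus P)"
    unfolding hs_plus_def hs_minus_def
    by (auto intro: convex_halfspace_ge convex_halfspace_le closed_halfspace_ge closed_halfspace_le)
  from Node.prems(5) consider "U \<in> set (cleavage_pieces (W \<inter> hs_plus P) l)"
    | "U \<in> set (cleavage_pieces (W \<inter> hs_minus P) r)" by auto
  then show ?case
  proof cases
    case 1
    then show ?thesis
      using Node.IH(1)[of "W \<inter> hs_plus P"] Node.prems halfspaces
      by (auto intro: convex_Int compact_Int_closed)
  next
    case 2
    then show ?thesis
      using Node.IH(2)[of "W \<inter> hs_minus P"] Node.prems halfspaces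
      by (auto intro: convex_Int compact_Int_closed)
  qed
qed

lemma cleave_alpha_well_defined:
  fixes U D :: "'a::euclidean_space set"
  assumes U: "convex U" "compact U" "interior U \<noteq> {}" "U \<subseteq> D" and "convex D"
    and s: "s \<in> D" "s \<notin> U"
  shows "\<exists>!p. p \<in> closed_segment s (centre_of_mass U) \<and> p \<in> rel_bd D U"
    and "cleave_alpha D U s \<in> closed_segment s (centre_of_mass U)"
    and "cleave_alpha D U s \<in> rel_bd D U"
proof -
  have "rel_bd D U = U \<inter> closure (D - U)"
    using U by (intro rel_bd_eq_Int_closure_diff) (auto intro: compact_imp_closed)
  then show ex1: "\<exists>!p. p \<in> closed_segment s (centre_of_mass U) \<and> p \<in> rel_bd D U"
    using ex1_closed_segment_Int_boundary[OF U(1) compact_imp_closed[OF U(2)] U(4) \<open>convex D\<close>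
        centre_of_mass_in_interior[OF U(1-3)] s]
    by simp
  from theI'[OF ex1]
  show "cleave_alpha D U s \<in> closed_segment s (centre_of_mass U)"
    and "cleave_alpha D U s \<in> rel_bd D U"
    unfolding cleave_alpha_def by auto
qed

lemma inj_on_cleave_alpha:
  fixes U D :: "'a::euclidean_space set"
  assumes U: "convex U" "compact U" "interior U \<noteq> {}" "U \<subseteq> D" and D: "convex D" "closed D"
  shows "inj_on (cleave_alpha D U) (frontier D - U)"
proof (rule inj_onI)
  fix s s' assume s: "s \<in> frontier D - U" "s' \<in> frontier D - U"
    and eq: "cleave_alpha D U s = cleave_alpha D U s'"
  define c where "c = centre_of_mass U"
  define p where "p = cleave_alpha D U s"
  have "c \<in> interior U"
    unfolding c_def using centre_of_mass_in_interior U by blast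
  have "frontier D \<subseteq> D"
    using D(2) by (simp add: frontier_subset_closed)
  then have "p \<in> closed_segment s c" "p \<in> rel_bd D U" "p \<in> closed_segment s' c"
    using cleave_alpha_well_defined(2,3)[OF U D(1), of s] cleave_alpha_well_defined(2)[OF U D(1), of s'] s
    by (auto simp: p_def c_def eq)
  moreover have "rel_bd D U = U \<inter> closure (D - U)"
    using U by (intro rel_bd_eq_Int_closure_diff) (auto intro: compact_imp_closed)
  ultimately have "p \<notin> interior U"
    using closure_mono[of "D - U" "- U"] closure_complement[of U] by auto
  then show "s = s'"
    using closed_segments_to_interior_point_inj[OF D(1) _ _ _ \<open>p \<in> closed_segment s c\<close>
        \<open>p \<in> closed_segment s' c\<close>] interior_mono[OF U(4)] \<open>c \<in> interior U\<close> s
    by blast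
qed

theorem mainTheorem1:
  fixes T :: "'a::euclidean_space cltree"
  assumes "DIM('a) \<ge> 2"
    and "valid_cleavage (cball 0 1) T"
  shows "(\<forall>i < length (cleavage_pieces (cball 0 1) T).
           \<forall>s \<in> sphere 0 1 - (cleavage_pieces (cball 0 1) T ! i \<inter> sphere 0 1).
             (\<exists>!p. p \<in> closed_segment s (centre_of_mass (cleavage_pieces (cball 0 1) T ! i))
                  \<and> p \<in> rel_bd (cball 0 1) (cleavage_pieces (cball 0 1) T ! i))
             \<and> cleave_alpha (cball 0 1) (cleavage_pieces (cball 0 1) T ! i) s
                 \<in> blueprint (cball 0 1) (cleavage_pieces (cball 0 1) T))
       \<and> (\<forall>i < length (cleavage_pieces (cball 0 1) T).
           \<forall>C \<in> components (sphere 0 1 - (cleavage_pieces (cball 0 1) T ! i \<inter> sphere 0 1)).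
             inj_on (cleave_alpha (cball 0 1) (cleavage_pieces (cball 0 1) T ! i)) C)"
proof -
  define D :: "'a set" where "D = cball 0 1"
  define Us where "Us = cleavage_pieces D T"
  have D: "convex D" "closed D" by (simp_all add: D_def)
  have piece: "convex U" "compact U" "interior U \<noteq> {}" "U \<subseteq> D" if "U \<in> set Us" for U
    using cleavage_pieces_convex_body[OF assms(2)[folded D_def]] that
    by (auto simp: Us_def D_def)
  have complement: "sphere 0 1 - (U \<inter> sphere 0 1) = frontier D - U" for U :: "'a set"
    by (auto simp: D_def)
  have "(\<exists>!p. p \<in> closed_segment s (centre_of_mass (Us ! i)) \<and> p \<in> rel_bd D (Us ! i))
         \<and> cleave_alpha D (Us ! i) s \<in> blueprint D Us"
    if "i < length Us" "s \<in> frontier D - Us ! i" for i s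
  proof -
    have U: "Us ! i \<in> set Us" using that(1) by simp
    have "s \<in> D" "s \<notin> Us ! i" using that(2) by (auto simp: D_def)
    note alpha = cleave_alpha_well_defined[OF piece[OF U] D(1) this]
    show ?thesis using alpha(1,3) U unfolding blueprint_def by blast
  qed
  moreover have "inj_on (cleave_alpha D (Us ! i)) C"
    if "i < length Us" "C \<in> components (frontier D - Us ! i)" for i C
    using inj_on_cleave_alpha[OF piece[OF nth_mem] D] that in_components_subset inj_on_subset
    by metis
  ultimately show ?thesis
    unfolding complement Us_def[symmetric] D_def[symmetric] by blast
qed

end
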